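(* Let $X$ be a set, $m\colon X\times X\to X$ a binary operation and $i\colon X\to X$ an involution ($i\circ i=1_X$) such that $i(m(x,y))=m(i(y),i(x))$ for all $x,y\in X$. Define $\theta,\varphi\colon X\times X\to X\times X$ by $\theta(x,y)=(i(x),m(x,y))$ and $\varphi(x,y)=(m(x,y),i(y))$. Then $(\theta,\varphi,m)$ is an involutive-2-link (in the category of sets) if and only if for all $x,y\in X$: $$m(i(x),m(x,y))=y\quad\text{and}\quad m(m(x,y),i(y))=x.$$
   Context: Involutive-2-link in a category: a triple $(\theta,\varphi,m)$ where $m\colon A\to B$ is a morphism and $\theta,\varphi\colon A\to A$ satisfy $\theta^2=\varphi^2=1_A$ and $\theta\varphi\theta=\varphi\theta\varphi$, and such that the three parallel morphisms $m,m\theta,m\varphi\colon A\to B$ are jointly monomorphic (in sets: the map $a\mapsto (m(a),m\theta(a),m\varphi(a))$ is injective). *)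

theory Defs
  imports Main
begin

text \<open>Sets are modelled as types (A = UNIV of type 'a).\<close>

definition involutive_2_link :: "('a \<Rightarrow> 'a) \<Rightarrow> ('a \<Rightarrow> 'a) \<Rightarrow> ('a \<Rightarrow> 'b) \<Rightarrow> bool" where
  "involutive_2_link \<theta> \<phi> m \<longleftrightarrow>
     \<theta> \<circ> \<theta> = id \<and> \<phi> \<circ> \<phi> = id \<and>
     \<theta> \<circ> \<phi> \<circ> \<theta> = \<phi> \<circ> \<theta> \<circ> \<phi> \<and>
     inj (\<lambda>a. (m a, m (\<theta> a), m (\<phi> a)))"

end

theory Submission
  imports Defs
begin

text \<open>Both squares are computed directly: \<theta> (\<theta> (x, y)) = (i (i x), m (i x) (m x y)) and
  \<phi> (\<phi> (x, y)) = (m (m x y) (i y), i (i y)), so the involution laws are exactly the two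
  cancellation identities. Conversely, these identities recover y = m (\<theta> (x, y)) and
  x = m (\<phi> (x, y)), giving joint monicity, and together with the anti-automorphism i
  they show that both \<theta>\<phi>\<theta> and \<phi>\<theta>\<phi> send (x, y) to (i y, i x).\<close>

lemma left_square_eq_id_iff:
  assumes "i \<circ> i = id"
  shows "(\<lambda>(x, y). (i x, m x y)) \<circ> (\<lambda>(x, y). (i x, m x y)) = id
     \<longleftrightarrow> (\<forall>x y. m (i x) (m x y) = y)"
  using assms by (auto simp: fun_eq_iff)

lemma right_square_eq_id_iff:
  assumes "i \<circ> i = id"
  shows "(\<lambda>(x, y). (m x y, i y)) \<circ> (\<lambda>(x, y). (m x y, i y)) = id
     \<longleftrightarrow> (\<forall>x y. m (m x y) (i y) = x)"
  using assms by (auto simp: fun_eq_iff)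

lemma inj_recovered_by_cancellation:
  assumes "\<And>x y. m (i x) (m x y) = y" and "\<And>x y. m (m x y) (i y) = x"
  shows "inj (\<lambda>a. ((\<lambda>(x, y). m x y) a, (\<lambda>(x, y). m x y) ((\<lambda>(x, y). (i x, m x y)) a),
                    (\<lambda>(x, y). m x y) ((\<lambda>(x, y). (m x y, i y)) a)))"
proof -
  have "(\<lambda>a. ((\<lambda>(x, y). m x y) a, (\<lambda>(x, y). m x y) ((\<lambda>(x, y). (i x, m x y)) a),
                (\<lambda>(x, y). m x y) ((\<lambda>(x, y). (m x y, i y)) a)))
      = (\<lambda>(x, y). (m x y, y, x))"
    by (auto simp: fun_eq_iff assms)
  then show ?thesis
    by (auto intro!: injI)
qed

context
  fixes m :: "'x \<Rightarrow> 'x \<Rightarrow> 'x" and i :: "'x \<Rightarrow> 'x"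
  assumes involution: "\<And>x. i (i x) = x"
    and anti: "\<And>x y. i (m x y) = m (i y) (i x)"
    and left_cancel: "\<And>x y. m (i x) (m x y) = y"
    and right_cancel: "\<And>x y. m (m x y) (i y) = x"
begin

lemma mult_inverse_of_product_right: "m y (i (m x y)) = i x"
  using left_cancel[of "i y" "i x"] by (simp add: anti involution)

lemma mult_inverse_of_product_left: "m (i (m x y)) x = i y"
  using right_cancel[of "i y" "i x"] by (simp add: anti involution)

lemma braid_left:
  "(\<lambda>(x, y). (i x, m x y)) \<circ> (\<lambda>(x, y). (m x y, i y)) \<circ> (\<lambda>(x, y). (i x, m x y))
     = (\<lambda>(x, y). (i y, i x))"
  by (auto simp: fun_eq_iff left_cancel mult_inverse_of_product_right)

lemma braid_right:
  "(\<lambda>(x, y). (m x y, i y)) \<circ> (\<lambda>(x, y). (i x, m x y)) \<circ> (\<lambda>(x, y). (m x y, i y))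
     = (\<lambda>(x, y). (i y, i x))"
  by (auto simp: fun_eq_iff right_cancel mult_inverse_of_product_left)

end

theorem mainTheorem2:
  fixes m :: "'x \<Rightarrow> 'x \<Rightarrow> 'x" and i :: "'x \<Rightarrow> 'x"
  assumes inv: "i \<circ> i = id"
    and anti: "\<And>x y. i (m x y) = m (i y) (i x)"
  shows "involutive_2_link (\<lambda>(x, y). (i x, m x y)) (\<lambda>(x, y). (m x y, i y)) (\<lambda>(x, y). m x y)
     \<longleftrightarrow> (\<forall>x y. m (i x) (m x y) = y \<and> m (m x y) (i y) = x)"
proof
  assume "involutive_2_link (\<lambda>(x, y). (i x, m x y)) (\<lambda>(x, y). (m x y, i y)) (\<lambda>(x, y). m x y)"
  then show "\<forall>x y. m (i x) (m x y) = y \<and> m (m x y) (i y) = x"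
    unfolding involutive_2_link_def left_square_eq_id_iff[OF inv] right_square_eq_id_iff[OF inv]
    by blast
next
  assume "\<forall>x y. m (i x) (m x y) = y \<and> m (m x y) (i y) = x"
  then have left_cancel: "\<And>x y. m (i x) (m x y) = y"
    and right_cancel: "\<And>x y. m (m x y) (i y) = x"
    by blast+
  have involution: "\<And>x. i (i x) = x"
    using inv by (simp add: fun_eq_iff)
  show "involutive_2_link (\<lambda>(x, y). (i x, m x y)) (\<lambda>(x, y). (m x y, i y)) (\<lambda>(x, y). m x y)"
    unfolding involutive_2_link_def left_square_eq_id_iff[OF inv] right_square_eq_id_iff[OF inv]
      braid_left[where m = m and i = i, OF involution anti left_cancel right_cancel]
      braid_right[where m = m and i = i, OF involution anti left_cancel right_cancel]
    by (simp add: left_cancel right_cancel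
        inj_recovered_by_cancellation[where m = m and i = i, OF left_cancel right_cancel])
qed

end
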